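(* Assume $G$ is connected. Let $S_n\subset V$ be nonempty with $S_n\ne V$, and let $\delta t>0$. For $\hat S\subset V$ define $$\mathcal F(\hat S,S_n)=\mathrm{TV}^q_a(\chi_{\hat S})-\mathrm{TV}^q_a(\chi_{S_n})+\frac1{\delta t}\big\langle\chi_{\hat S}-\chi_{S_n},(\chi_{\hat S}-\chi_{S_n})\,d^{\Sigma_n}\big\rangle_{\mathcal V},$$ $$\mathcal F'(\hat S,S_n)=\mathrm{TV}^q_a(\chi_{\hat S})-\mathrm{TV}^q_a(\chi_{S_n})+\frac1{\delta t}\big\langle\chi_{\hat S},sd^{\Sigma_n}\big\rangle_{\mathcal V}.$$ Here the product $(\chi_{\hat S}-\chi_{S_n})\,d^{\Sigma_n}$ is pointwise. Then $$\operatorname*{argmin}_{\hat S\subset V}\mathcal F(\hat S,S_n)=\operatorname*{argmin}_{\hat S\subset V}\mathcal F'(\hat S,S_n),$$ and moreover $\mathcal F'(\hat S,S_n)=\langle\kappa^{q,r}_{\hat S}+\kappa^{q,r}_{S_n},\chi_{\hat S}-\chi_{S_n}\rangle_{\mathcal V}+\frac1{\delta t}\langle\chi_{\hat S},sd^{\Sigma_n}\rangle_{\mathcal V}$.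
   Context: $G=(V,E)$ is a finite undirected weighted graph with vertex set $V=\{1,\dots,n\}$. The weights satisfy $\omega_{ij}=\omega_{ji}\ge0$, with $\omega_{ij}>0$ iff $\{i,j\}\in E$, and $\omega_{ii}=0$. The degrees are $d_i=\sum_j\omega_{ij}>0$. Parameters $r\in[0,1]$ and $q\in[1/2,1]$ are fixed, and $\omega_{ij}^q:=0$ when $\omega_{ij}=0$. $\mathcal V$ is the space of functions $V\to\mathbb R$ with $\langle u,v\rangle_{\mathcal V}=\sum_iu_iv_id_i^r$, and $\chi_S$ is the indicator of $S$; $S^c=V\setminus S$. The anisotropic total variation is $\mathrm{TV}^q_a(u)=\frac12\sum_{i,j}\omega_{ij}^q|u_i-u_j|$. The curvature $\kappa^{q,r}_S$ is given by $(\kappa^{q,r}_S)_i=d_i^{-r}\sum_{j\notin S}\omega_{ij}^q$ for $i\in S$, and $(\kappa^{q,r}_S)_i=-d_i^{-r}\sum_{j\in S}\omega_{ij}^q$ for $i\notin S$. Graph distance: each edge $\{i,j\}$ with $\omega_{ij}>0$ has length $\omega_{ij}^{q-1}$. The distance $d^G_{ij}$ is the minimum total length of a path from $i$ to $j$ along edges, with $d^G_{ii}=0$. For nonempty $T\subset V$, $d^T_i=\min_{j\in T}d^G_{ij}$. Boundary: $\partial S=\{i\in S:\exists j\notin S,\ \omega_{ij}>0\}$, and $\Sigma_n=\partial S_n\cup\partial(S_n^c)$, the set of nodes incident to an edge joining $S_n$ and $S_n^c$. The signed distance is $sd^{\Sigma_n}=(\chi_{S_n^c}-\chi_{S_n})\,d^{\Sigma_n}$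 (pointwise product). *)

theory Defs
  imports Complex_Main
begin

definition Vset :: "nat \<Rightarrow> nat set" where
  "Vset n = {1..n}"

definition deg :: "nat \<Rightarrow> (nat \<Rightarrow> nat \<Rightarrow> real) \<Rightarrow> nat \<Rightarrow> real" where
  "deg n w i = (\<Sum>j\<in>Vset n. w i j)"

definition weight_graph :: "nat \<Rightarrow> (nat \<Rightarrow> nat \<Rightarrow> real) \<Rightarrow> bool" where
  "weight_graph n w \<longleftrightarrow>
     (\<forall>i\<in>Vset n. \<forall>j\<in>Vset n. w i j = w j i \<and> 0 \<le> w i j) \<and> (\<forall>i\<in>Vset n. w i i = 0) \<and>
     (\<forall>i\<in>Vset n. 0 < deg n w i)"

definition is_walk :: "nat \<Rightarrow> (nat \<Rightarrow> nat \<Rightarrow> real) \<Rightarrow> nat list \<Rightarrow> bool" where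
  "is_walk n w xs \<longleftrightarrow> xs \<noteq> [] \<and> set xs \<subseteq> Vset n \<and>
     (\<forall>k. Suc k < length xs \<longrightarrow> 0 < w (xs ! k) (xs ! Suc k))"

definition connected_graph :: "nat \<Rightarrow> (nat \<Rightarrow> nat \<Rightarrow> real) \<Rightarrow> bool" where
  "connected_graph n w \<longleftrightarrow>
     (\<forall>i\<in>Vset n. \<forall>j\<in>Vset n. \<exists>xs. is_walk n w xs \<and> hd xs = i \<and> last xs = j)"

definition walk_len :: "real \<Rightarrow> (nat \<Rightarrow> nat \<Rightarrow> real) \<Rightarrow> nat list \<Rightarrow> real" where
  "walk_len q w xs = (\<Sum>k<length xs - 1. w (xs ! k) (xs ! Suc k) powr (q - 1))"

definition graph_dist :: "nat \<Rightarrow> real \<Rightarrow> (nat \<Rightarrow> nat \<Rightarrow> real) \<Rightarrow> nat \<Rightarrow> nat \<Rightarrow> real" where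
  "graph_dist n q w i j =
     Inf {walk_len q w xs | xs. is_walk n w xs \<and> hd xs = i \<and> last xs = j}"

definition set_dist :: "nat \<Rightarrow> real \<Rightarrow> (nat \<Rightarrow> nat \<Rightarrow> real) \<Rightarrow> nat set \<Rightarrow> nat \<Rightarrow> real" where
  "set_dist n q w T i = Min ((\<lambda>j. graph_dist n q w i j) ` T)"

definition chi :: "nat set \<Rightarrow> nat \<Rightarrow> real" where
  "chi S i = (if i \<in> S then 1 else 0)"

definition ip :: "nat \<Rightarrow> (nat \<Rightarrow> nat \<Rightarrow> real) \<Rightarrow> real \<Rightarrow> (nat \<Rightarrow> real) \<Rightarrow> (nat \<Rightarrow> real) \<Rightarrow> real" where
  "ip n w r u v = (\<Sum>i\<in>Vset n. u i * v i * deg n w i powr r)"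

text \<open>Anisotropic TV; note 0 powr q = 0, matching the convention w^q := 0 when w = 0.\<close>
definition TVa :: "nat \<Rightarrow> (nat \<Rightarrow> nat \<Rightarrow> real) \<Rightarrow> real \<Rightarrow> (nat \<Rightarrow> real) \<Rightarrow> real" where
  "TVa n w q u = (1/2) * (\<Sum>i\<in>Vset n. \<Sum>j\<in>Vset n. w i j powr q * \<bar>u i - u j\<bar>)"

definition curv :: "nat \<Rightarrow> (nat \<Rightarrow> nat \<Rightarrow> real) \<Rightarrow> real \<Rightarrow> real \<Rightarrow> nat set \<Rightarrow> nat \<Rightarrow> real" where
  "curv n w q r S i =
     (if i \<in> S then deg n w i powr (-r) * (\<Sum>j\<in>Vset n - S. w i j powr q)
      else - (deg n w i powr (-r) * (\<Sum>j\<in>S. w i j powr q)))"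

definition bdry :: "nat \<Rightarrow> (nat \<Rightarrow> nat \<Rightarrow> real) \<Rightarrow> nat set \<Rightarrow> nat set" where
  "bdry n w S = {i\<in>S. \<exists>j\<in>Vset n - S. 0 < w i j}"

definition Sigma_set :: "nat \<Rightarrow> (nat \<Rightarrow> nat \<Rightarrow> real) \<Rightarrow> nat set \<Rightarrow> nat set" where
  "Sigma_set n w S = bdry n w S \<union> bdry n w (Vset n - S)"

definition signed_dist :: "nat \<Rightarrow> real \<Rightarrow> (nat \<Rightarrow> nat \<Rightarrow> real) \<Rightarrow> nat set \<Rightarrow> nat \<Rightarrow> real" where
  "signed_dist n q w S i =
     (chi (Vset n - S) i - chi S i) * set_dist n q w (Sigma_set n w S) i"

definition Fun_F :: "nat \<Rightarrow> (nat \<Rightarrow> nat \<Rightarrow> real) \<Rightarrow> real \<Rightarrow> real \<Rightarrow> real \<Rightarrow> nat set \<Rightarrow> nat set \<Rightarrow> real" where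
  "Fun_F n w q r dt Sh S =
     TVa n w q (chi Sh) - TVa n w q (chi S)
     + (1/dt) * ip n w r (\<lambda>i. chi Sh i - chi S i)
         (\<lambda>i. (chi Sh i - chi S i) * set_dist n q w (Sigma_set n w S) i)"

definition Fun_F' :: "nat \<Rightarrow> (nat \<Rightarrow> nat \<Rightarrow> real) \<Rightarrow> real \<Rightarrow> real \<Rightarrow> real \<Rightarrow> nat set \<Rightarrow> nat set \<Rightarrow> real" where
  "Fun_F' n w q r dt Sh S =
     TVa n w q (chi Sh) - TVa n w q (chi S)
     + (1/dt) * ip n w r (chi Sh) (signed_dist n q w S)"

definition argmin_sets :: "nat \<Rightarrow> (nat set \<Rightarrow> real) \<Rightarrow> nat set set" where
  "argmin_sets n F = {Sh. Sh \<subseteq> Vset n \<and> (\<forall>T. T \<subseteq> Vset n \<longrightarrow> F Sh \<le> F T)}"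

end

theory Submission
  imports Defs
begin

text \<open>The two functionals differ by \<open>(1/\<delta>t) \<langle>\<chi>\<^sub>S\<^sub>n, d\<^sup>\<Sigma>\<^sup>n\<rangle>\<close>, which does not depend on
  \<open>\<hat>S\<close>, because \<open>(\<chi>\<^sub>A - \<chi>\<^sub>B)\<^sup>2 = \<chi>\<^sub>A - 2\<chi>\<^sub>A\<chi>\<^sub>B + \<chi>\<^sub>B\<close>; so they have the same minimisers.
  The curvature formula is discrete integration by parts: \<open>\<kappa>\<^sub>T d\<^sup>r\<close> is the weighted
  graph divergence of \<open>\<chi>\<^sub>T\<close>, and symmetrising the double sum turns
  \<open>(\<nabla>\<chi>\<^sub>T + \<nabla>\<chi>\<^sub>S)(\<nabla>\<chi>\<^sub>T - \<nabla>\<chi>\<^sub>S)\<close> into \<open>|\<nabla>\<chi>\<^sub>T|\<^sup>2 - |\<nabla>\<chi>\<^sub>S|\<^sup>2 = |\<nabla>\<chi>\<^sub>T| - |\<nabla>\<chi>\<^sub>S|\<close>.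
  Neither argument uses connectivity, the ranges of \<open>q\<close> and \<open>r\<close>, or \<open>\<delta>t > 0\<close>.\<close>

lemma argmin_sets_add_const:
  "argmin_sets n (\<lambda>T. F T + c) = argmin_sets n F"
  unfolding argmin_sets_def by simp

lemma Fun_F_eq_Fun_F'_plus_const:
  "Fun_F n w q r dt Sh S = Fun_F' n w q r dt Sh S
     + (1/dt) * ip n w r (chi S) (set_dist n q w (Sigma_set n w S))"
proof -
  let ?D = "set_dist n q w (Sigma_set n w S)"
  have "(chi Sh i - chi S i) * ((chi Sh i - chi S i) * ?D i) * deg n w i powr r
     = chi Sh i * signed_dist n q w S i * deg n w i powr r + chi S i * ?D i * deg n w i powr r"
    if "i \<in> Vset n" for i
    using that by (simp add: signed_dist_def chi_def algebra_simps)
  then have "ip n w r (\<lambda>i. chi Sh i - chi S i) (\<lambda>i. (chi Sh i - chi S i) * ?D i)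
     = ip n w r (chi Sh) (signed_dist n q w S) + ip n w r (chi S) ?D"
    unfolding ip_def sum.distrib[symmetric] by (intro sum.cong refl)
  then show ?thesis
    unfolding Fun_F_def Fun_F'_def by (simp add: algebra_simps)
qed

lemma argmin_Fun_F_eq_argmin_Fun_F':
  "argmin_sets n (\<lambda>Sh. Fun_F n w q r dt Sh S) = argmin_sets n (\<lambda>Sh. Fun_F' n w q r dt Sh S)"
  unfolding Fun_F_eq_Fun_F'_plus_const by (rule argmin_sets_add_const)

lemma curv_mult_deg_powr:
  assumes wg: "weight_graph n w" and T: "T \<subseteq> Vset n" and i: "i \<in> Vset n"
  shows "curv n w q r T i * deg n w i powr r = (\<Sum>j\<in>Vset n. w i j powr q * (chi T i - chi T j))"
proof -
  have "deg n w i > 0"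
    using wg i unfolding weight_graph_def by auto
  then have cancel: "deg n w i powr (-r) * deg n w i powr r = 1"
    by (simp add: powr_minus)
  have fin: "finite (Vset n)"
    by (simp add: Vset_def)
  show ?thesis
  proof (cases "i \<in> T")
    case True
    have "(\<Sum>j\<in>Vset n - T. w i j powr q) = (\<Sum>j\<in>Vset n. w i j powr q * (1 - chi T j))"
      by (rule sum.mono_neutral_cong_left) (auto simp: fin chi_def)
    with True cancel show ?thesis
      unfolding curv_def by (simp add: chi_def)
  next
    case False
    have "(\<Sum>j\<in>T. w i j powr q) = (\<Sum>j\<in>Vset n. w i j powr q * chi T j)"
      by (rule sum.mono_neutral_cong_left) (use T in \<open>auto simp: fin chi_def\<close>)
    with False cancel have "curv n w q r T i * deg n w i powr r = - (\<Sum>j\<in>Vset n. w i j powr q * chi T j)"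
      unfolding curv_def by (simp add: algebra_simps)
    with False show ?thesis
      by (simp add: chi_def sum_negf[symmetric])
  qed
qed

lemma sum_sum_symmetric_swap:
  assumes "\<And>i j. i \<in> A \<Longrightarrow> j \<in> A \<Longrightarrow> K i j = K j i"
  shows "(\<Sum>i\<in>A. \<Sum>j\<in>A. K i j * g i j) = (\<Sum>i\<in>A. \<Sum>j\<in>A. K i j * g j i)"
proof -
  have "(\<Sum>i\<in>A. \<Sum>j\<in>A. K i j * g i j) = (\<Sum>j\<in>A. \<Sum>i\<in>A. K i j * g i j)"
    by (rule sum.swap)
  also have "\<dots> = (\<Sum>j\<in>A. \<Sum>i\<in>A. K j i * g i j)"
    using assms by (intro sum.cong refl) auto
  finally show ?thesis .
qed

lemma chi_grad_sum_mult_diff: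
  "((chi T i - chi T j) + (chi S i - chi S j)) * (chi T i - chi S i)
   + ((chi T j - chi T i) + (chi S j - chi S i)) * (chi T j - chi S j)
   = \<bar>chi T i - chi T j\<bar> - \<bar>chi S i - chi S j\<bar>"
  by (simp add: chi_def)

lemma TVa_diff_eq_ip_curv:
  assumes wg: "weight_graph n w" and T: "T \<subseteq> Vset n" and S: "S \<subseteq> Vset n"
  shows "TVa n w q (chi T) - TVa n w q (chi S)
     = ip n w r (\<lambda>i. curv n w q r T i + curv n w q r S i) (\<lambda>i. chi T i - chi S i)"
proof -
  define g where "g i j = ((chi T i - chi T j) + (chi S i - chi S j)) * (chi T i - chi S i)" for i j
  let ?G = "\<lambda>g. \<Sum>i\<in>Vset n. \<Sum>j\<in>Vset n. w i j powr q * g i j"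
  have "ip n w r (\<lambda>i. curv n w q r T i + curv n w q r S i) (\<lambda>i. chi T i - chi S i)
     = (\<Sum>i\<in>Vset n. (curv n w q r T i * deg n w i powr r + curv n w q r S i * deg n w i powr r)
          * (chi T i - chi S i))"
    unfolding ip_def by (intro sum.cong refl) (simp add: algebra_simps)
  also have "\<dots> = ?G g"
  proof (rule sum.cong [OF refl])
    fix i assume i: "i \<in> Vset n"
    show "(curv n w q r T i * deg n w i powr r + curv n w q r S i * deg n w i powr r)
        * (chi T i - chi S i) = (\<Sum>j\<in>Vset n. w i j powr q * g i j)"
      unfolding curv_mult_deg_powr[OF wg T i] curv_mult_deg_powr[OF wg S i]
        sum.distrib[symmetric] sum_distrib_right g_def
      by (intro sum.cong refl) (simp add: algebra_simps)
  qed
  finally have ip_eq: "ip n w r (\<lambda>i. curv n w q r T i + curv n w q r S i) (\<lambda>i. chi T i - chi S i)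
      = ?G g" .
  have "?G g = ?G (\<lambda>i j. g j i)"
    using wg unfolding weight_graph_def by (intro sum_sum_symmetric_swap) auto
  then have "2 * ?G g = ?G (\<lambda>i j. g i j + g j i)"
    by (simp add: distrib_left sum.distrib)
  also have "\<dots> = ?G (\<lambda>i j. \<bar>chi T i - chi T j\<bar> - \<bar>chi S i - chi S j\<bar>)"
    unfolding g_def chi_grad_sum_mult_diff ..
  also have "\<dots> = 2 * (TVa n w q (chi T) - TVa n w q (chi S))"
    unfolding TVa_def by (simp add: sum_subtractf right_diff_distrib)
  finally show ?thesis
    using ip_eq by simp
qed

theorem mainTheorem7:
  fixes n :: nat and w :: "nat \<Rightarrow> nat \<Rightarrow> real" and r q dt :: real and S :: "nat set"
  assumes "weight_graph n w"
    and "connected_graph n w"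
    and "0 \<le> r" and "r \<le> 1" and "1/2 \<le> q" and "q \<le> 1"
    and "S \<subseteq> Vset n" and "S \<noteq> {}" and "S \<noteq> Vset n"
    and "0 < dt"
  shows "argmin_sets n (\<lambda>Sh. Fun_F n w q r dt Sh S) = argmin_sets n (\<lambda>Sh. Fun_F' n w q r dt Sh S)
    \<and> (\<forall>Sh. Sh \<subseteq> Vset n \<longrightarrow>
         Fun_F' n w q r dt Sh S =
           ip n w r (\<lambda>i. curv n w q r Sh i + curv n w q r S i) (\<lambda>i. chi Sh i - chi S i)
           + (1/dt) * ip n w r (chi Sh) (signed_dist n q w S))"
  using argmin_Fun_F_eq_argmin_Fun_F' TVa_diff_eq_ip_curv[OF assms(1) _ assms(7)]
  unfolding Fun_F'_def by simp

end
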